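(* Consider the following model in $\mathbb{R}^2$. A base station (BS) is at $\mathbf{o}=(0,0)$ and a mobile station (MS) is at a point $\mathbf{o}'$ with $\|\mathbf{o}-\mathbf{o}'\|=d'>0$. For each type $k\in\{s,t\}$ fix radii $v_{k,1},v_{k,2}>0$ with $D_k:=\{\mathbf{p}:\|\mathbf{p}-\mathbf{o}\|\le v_{k,1},\ \|\mathbf{p}-\mathbf{o}'\|\le v_{k,2}\}$ of positive area, and fix $\lambda_s,\lambda_t>0$, $\gamma\in[0,1]$. Let $U$ be Bernoulli with mean $\gamma$; short scatterers form a homogeneous Poisson point process of intensity $\lambda_s$ and, conditionally on $U$, tall scatterers form an independent Poisson point process of intensity $U\lambda_t$. A scatterer of type $k$ is active if it lies in $D_k$; let $N_k$ be the number of active scatterers of type $k$, located at $\mathbf{p}_k^1,\dots,\mathbf{p}_k^{N_k}$, and set $X_k^i=\|\mathbf{p}_k^i-\mathbf{o}\|$, $Y_k^i=\|\mathbf{p}_k^i-\mathbf{o}'\|$. Each active scatterer carries a real random coefficient $R_k^i$; for each $k$ the coefficients $R_k^i$ are identically distributed, and the marks $R_k^i$ are independent of each other and of the scatterer locations. Let $\lambda>0$ (wavelength), $k_0>0$, and let $g_1,g_2$ be functions of two positive variables with $g_2>0$; set $\theta(X,Y)=2\pi g_1(X,Y)/\lambda$. The received power is $$P_r=k_0\Bigl|\sum_{k\in\{s,t\}}\sum_{i=1}^{N_k}\frac{R_k^i\exp\bigl(-j\,\theta(X_k^i,Y_k^i)\bigr)}{g_2(X_k^i,Y_k^i)}\Bigr|^2,$$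 with $j=\sqrt{-1}$. Let $\mu_k=\lambda_k\mathcal{A}(d',v_{k,1},v_{k,2})$ and, for $(X_k^i,Y_k^i)$ the distances of a point uniform on $D_k$ and $R_k^i$ an independent coefficient of type $k$, $$h_k=\mathrm{E}\Bigl[\tfrac{R_k^i\cos\theta(X_k^i,Y_k^i)}{g_2(X_k^i,Y_k^i)}\Bigr],\ g_k=\mathrm{Var}\Bigl[\tfrac{R_k^i\cos\theta(X_k^i,Y_k^i)}{g_2(X_k^i,Y_k^i)}\Bigr],\ h'_k=\mathrm{E}\Bigl[\tfrac{R_k^i\sin\theta(X_k^i,Y_k^i)}{g_2(X_k^i,Y_k^i)}\Bigr],\ g'_k=\mathrm{Var}\Bigl[\tfrac{R_k^i\sin\theta(X_k^i,Y_k^i)}{g_2(X_k^i,Y_k^i)}\Bigr]$$ (assumed finite). Then $$\mathrm{E}[P_r]=\gamma k_0\Bigl(\sum_{k}(g_k+h_k^2+g'_k+h_k'^2)\mu_k+\Bigl(\sum_k h_k\mu_k\Bigr)^2+\Bigl(\sum_k h'_k\mu_k\Bigr)^2\Bigr)+(1-\gamma)k_0\Bigl((g_s+h_s^2+g'_s+h_s'^2)\mu_s+(h_s\mu_s)^2+(h'_s\mu_s)^2\Bigr),$$ where the sums run over $k\in\{s,t\}$.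
   Context: $\mathcal{A}(d_0,a,b)$ denotes the area of the intersection of two disks of radii $a,b$ whose centers are at distance $d_0$. The model is that of a narrowband channel with isotropic unit-gain antennas, each multipath component interacting with exactly one active scatterer (e.g. scattering: $g_1=X+Y$, $g_2=XY$; reflection: $g_1=g_2=X+Y$). *)

theory Defs
  imports "HOL-Probability.Probability"
begin

text \<open>Area of the intersection of two disks of radii a, b whose centres are at distance d
  (the paper's A(d,a,b)); the plane R^2 is modelled as real \<times> real (Euclidean norm).\<close>
definition lens_area :: "real \<Rightarrow> real \<Rightarrow> real \<Rightarrow> real" where
  "lens_area d a b = measure lborel (cball (0::real \<times> real) a \<inter> cball (d, 0) b)"

text \<open>Poisson probability mass function with mean mu (mu = 0 gives the point mass at 0).\<close>
definition poisson_prob :: "real \<Rightarrow> nat \<Rightarrow> real" where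
  "poisson_prob mu n = mu ^ n / fact n * exp (- mu)"

text \<open>The sigma-algebra (as a family of events) generated by a random variable X:
  this is literally what indep_vars unfolds to.\<close>
definition gen_sets :: "'a measure \<Rightarrow> 'b measure \<Rightarrow> ('a \<Rightarrow> 'b) \<Rightarrow> 'a set set" where
  "gen_sets M N X = {X -` A \<inter> space M | A. A \<in> sets N}"

text \<open>Index of the independent random objects of the model.\<close>
datatype scat_var = VUNt | VNs | VPs nat | VPt nat | VRs nat | VRt nat

definition phase :: "real \<Rightarrow> (real \<Rightarrow> real \<Rightarrow> real) \<Rightarrow> real \<Rightarrow> real \<Rightarrow> real" where
  "phase wl g1 x y = 2 * pi * g1 x y / wl"

definition cos_comp :: "real \<Rightarrow> (real \<Rightarrow> real \<Rightarrow> real) \<Rightarrow> (real \<Rightarrow> real \<Rightarrow> real)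
    \<Rightarrow> real \<times> real \<Rightarrow> real \<Rightarrow> real \<times> real \<Rightarrow> real" where
  "cos_comp wl g1 g2 o' r p = r * cos (phase wl g1 (dist p 0) (dist p o')) / g2 (dist p 0) (dist p o')"

definition sin_comp :: "real \<Rightarrow> (real \<Rightarrow> real \<Rightarrow> real) \<Rightarrow> (real \<Rightarrow> real \<Rightarrow> real)
    \<Rightarrow> real \<times> real \<Rightarrow> real \<Rightarrow> real \<times> real \<Rightarrow> real" where
  "sin_comp wl g1 g2 o' r p = r * sin (phase wl g1 (dist p 0) (dist p o')) / g2 (dist p 0) (dist p o')"

definition path_gain :: "real \<Rightarrow> (real \<Rightarrow> real \<Rightarrow> real) \<Rightarrow> (real \<Rightarrow> real \<Rightarrow> real)
    \<Rightarrow> real \<times> real \<Rightarrow> real \<Rightarrow> real \<times> real \<Rightarrow> complex" where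
  "path_gain wl g1 g2 o' r p = complex_of_real r
      * exp (- \<i> * complex_of_real (phase wl g1 (dist p 0) (dist p o')))
      / complex_of_real (g2 (dist p 0) (dist p o'))"

end

theory Submission
  imports Defs
begin

text \<open>
  With z the complex sum, \<open>k0 |z|\<^sup>2 = k0 ((Re z)\<^sup>2 + (Im z)\<^sup>2)\<close>, and each of \<open>Re z\<close>, \<open>- Im z\<close>
  is a sum \<open>S + T\<close> of two independent random sums, \<open>S = (\<Sum>i<Ns. A i)\<close> over the short and
  \<open>T\<close> over the tall scatterers.  The terms \<open>A i = \<phi> (R i) (P i)\<close> have common moments \<open>a, b\<close>
  because coefficient and position are independent with fixed marginals, and they are independent
  of the count \<open>N\<close>.  Splitting on the value of \<open>N\<close> gives Wald's identity \<open>E S = E N * a\<close> and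
  \<open>E S\<^sup>2 = E N * (b - a\<^sup>2) + E (N\<^sup>2) * a\<^sup>2\<close>.  The short count is Poisson, with
  \<open>E N = \<mu>s\<close> and \<open>E (N\<^sup>2) = \<mu>s + \<mu>s\<^sup>2\<close>; the tall count is a \<open>\<gamma>\<close>-mixture of a Poisson
  count and the point mass at 0, so its moments are \<open>\<gamma>\<close> times the Poisson ones.  Expanding
  \<open>E (S + T)\<^sup>2 = E S\<^sup>2 + 2 E S E T + E T\<^sup>2\<close> for both components gives the formula.
\<close>

section \<open>Moments of the Poisson distribution\<close>

lemma sums_poisson_prob: "poisson_prob \<mu> sums 1"
proof -
  have "(\<lambda>n. \<mu> ^ n / fact n) sums exp \<mu>"
    using exp_converges[of \<mu>] by (simp add: divide_inverse_commute scaleR_conv_of_real mult.commute)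
  from sums_mult2[OF this, of "exp (- \<mu>)"] show ?thesis
    by (simp add: poisson_prob_def[abs_def] exp_minus_inverse)
qed

lemma Suc_mult_poisson_prob_Suc: "real (Suc n) * poisson_prob \<mu> (Suc n) = \<mu> * poisson_prob \<mu> n"
  by (simp add: poisson_prob_def del: of_nat_Suc)

lemma sums_poisson_mean: "(\<lambda>n. real n * poisson_prob \<mu> n) sums \<mu>"
proof -
  have "(\<lambda>n. real (Suc n) * poisson_prob \<mu> (Suc n)) sums \<mu>"
    using sums_mult[OF sums_poisson_prob[of \<mu>], of \<mu>] by (simp only: Suc_mult_poisson_prob_Suc) simp
  from sums_Suc_iff[of "\<lambda>n. real n * poisson_prob \<mu> n", THEN iffD1, OF this] show ?thesis
    by simp
qed

lemma sums_poisson_second_moment: "(\<lambda>n. (real n)\<^sup>2 * poisson_prob \<mu> n) sums (\<mu> + \<mu>\<^sup>2)"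
proof -
  have "real (Suc n) * (real (Suc n) * poisson_prob \<mu> (Suc n))
      = \<mu> * (real n * poisson_prob \<mu> n + poisson_prob \<mu> n)" for n
    by (simp only: Suc_mult_poisson_prob_Suc) (simp add: algebra_simps)
  then have "(\<lambda>n. (real (Suc n))\<^sup>2 * poisson_prob \<mu> (Suc n)) sums (\<mu> * (\<mu> + 1))"
    using sums_mult[OF sums_add[OF sums_poisson_mean sums_poisson_prob[of \<mu>]], of \<mu>]
    by (simp add: power2_eq_square mult.assoc)
  from sums_Suc_iff[of "\<lambda>n. (real n)\<^sup>2 * poisson_prob \<mu> n", THEN iffD1, OF this] show ?thesis
    by (simp add: algebra_simps power2_eq_square)
qed

section \<open>Random sums\<close>

lemma sums_integral_count_slices:
  fixes N :: "'a \<Rightarrow> nat" and F :: "'a \<Rightarrow> real"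
  assumes N[measurable]: "N \<in> measurable M (count_space UNIV)" and F: "integrable M F"
  shows "(\<lambda>n. \<integral>\<omega>. of_bool (N \<omega> = n) * F \<omega> \<partial>M) sums (\<integral>\<omega>. F \<omega> \<partial>M)"
proof -
  note F_measurable[measurable] = borel_measurable_integrable[OF F]
  have partial_sum: "(\<Sum>n<K. of_bool (N \<omega> = n) * F \<omega>) = of_bool (N \<omega> < K) * F \<omega>" for K \<omega>
    by (simp add: sum_distrib_right[symmetric] of_bool_def)
  have slice_integrable: "integrable M (\<lambda>\<omega>. of_bool (N \<omega> = n) * F \<omega>)" for n
    by (rule Bochner_Integration.integrable_bound[OF F]) auto
  have "(\<lambda>K. \<integral>\<omega>. of_bool (N \<omega> < K) * F \<omega> \<partial>M) \<longlonglongrightarrow> (\<integral>\<omega>. F \<omega> \<partial>M)"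
  proof (rule integral_dominated_convergence[where w="\<lambda>\<omega>. \<bar>F \<omega>\<bar>"])
    show "AE \<omega> in M. (\<lambda>K. of_bool (N \<omega> < K) * F \<omega>) \<longlonglongrightarrow> F \<omega>"
    proof (intro AE_I2 tendsto_eventually)
      fix \<omega>
      show "\<forall>\<^sub>F K in sequentially. of_bool (N \<omega> < K) * F \<omega> = F \<omega>"
        by (rule eventually_sequentiallyI[of "Suc (N \<omega>)"]) auto
    qed
  qed (use F in auto)
  then show ?thesis
    unfolding sums_def
    by (simp add: Bochner_Integration.integral_sum[symmetric] slice_integrable partial_sum)
qed

lemma integrable_of_count_slices:
  fixes N :: "'a \<Rightarrow> nat" and F :: "'a \<Rightarrow> real"
  assumes "\<And>\<omega>. 0 \<le> F \<omega>"
    and slice_integrable: "\<And>n. integrable M (\<lambda>\<omega>. of_bool (N \<omega> = n) * F \<omega>)"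
    and "summable (\<lambda>n. \<integral>\<omega>. of_bool (N \<omega> = n) * F \<omega> \<partial>M)"
  shows "integrable M F"
proof -
  have slices_sum: "(\<lambda>n. of_bool (N \<omega> = n) * F \<omega>) sums F \<omega>" for \<omega>
  proof -
    have "(\<lambda>n. of_bool (N \<omega> = n) * F \<omega>) = (\<lambda>n. if n = N \<omega> then F \<omega> else 0)"
      by auto
    then show ?thesis using sums_single[of "N \<omega>" "\<lambda>_. F \<omega>"] by simp
  qed
  have "integrable M (\<lambda>\<omega>. \<Sum>n. of_bool (N \<omega> = n) * F \<omega>)"
  proof (rule integrable_suminf[OF slice_integrable])
    show "AE \<omega> in M. summable (\<lambda>n. norm (of_bool (N \<omega> = n) * F \<omega>))"
      using slices_sum assms(1) by (auto intro!: AE_I2 sums_summable)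
    show "summable (\<lambda>n. \<integral>\<omega>. norm (of_bool (N \<omega> = n) * F \<omega>) \<partial>M)"
      using assms(1,3) by simp
  qed
  moreover have "(\<lambda>\<omega>. \<Sum>n. of_bool (N \<omega> = n) * F \<omega>) = F"
    using slices_sum by (simp add: fun_eq_iff sums_iff)
  ultimately show ?thesis by simp
qed

lemma borel_measurable_random_sum:
  fixes A :: "nat \<Rightarrow> 'a \<Rightarrow> real"
  assumes "N \<in> measurable M (count_space UNIV)" "\<And>i. A i \<in> borel_measurable M"
  shows "(\<lambda>\<omega>. \<Sum>i<N \<omega>. A i \<omega>) \<in> borel_measurable M"
  by (rule measurable_compose_countable'[where f="\<lambda>n \<omega>. \<Sum>i<n. A i \<omega>" and I=UNIV]) (use assms in auto)

locale random_sum = prob_space +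
  fixes N :: "'a \<Rightarrow> nat" and A :: "nat \<Rightarrow> 'a \<Rightarrow> real" and a b :: real
  assumes measurable_count[measurable]: "N \<in> measurable M (count_space UNIV)"
    and indep_count_terms:
      "indep_vars (\<lambda>_. borel) (\<lambda>j. case j of None \<Rightarrow> (\<lambda>\<omega>. real (N \<omega>)) | Some i \<Rightarrow> A i) UNIV"
    and integrable_term: "\<And>i. integrable M (A i)"
    and integrable_term_square: "\<And>i. integrable M (\<lambda>\<omega>. (A i \<omega>)\<^sup>2)"
    and integral_term: "\<And>i. (\<integral>\<omega>. A i \<omega> \<partial>M) = a"
    and integral_term_square: "\<And>i. (\<integral>\<omega>. (A i \<omega>)\<^sup>2 \<partial>M) = b"
begin

lemma measurable_term[measurable]: "A i \<in> borel_measurable M"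
proof -
  have "random_variable borel ((\<lambda>j. case j of None \<Rightarrow> (\<lambda>\<omega>. real (N \<omega>)) | Some i \<Rightarrow> A i) (Some i))"
    using indep_count_terms unfolding indep_vars_def2 by blast
  then show ?thesis by simp
qed

lemma indep_count_indicator_terms:
  assumes "f \<in> borel_measurable borel"
  shows "indep_vars (\<lambda>_. borel)
    (\<lambda>j. case j of None \<Rightarrow> (\<lambda>\<omega>. of_bool (N \<omega> = n)) | Some i \<Rightarrow> (\<lambda>\<omega>. f (A i \<omega>))) UNIV"
proof -
  let ?g = "\<lambda>j. case j of None \<Rightarrow> (\<lambda>x. of_bool (x = real n)) | Some i \<Rightarrow> f"
  have "indep_vars (\<lambda>_. borel) (\<lambda>j \<omega>. ?g j ((case j of None \<Rightarrow> (\<lambda>\<omega>. real (N \<omega>)) | Some i \<Rightarrow> A i) \<omega>)) UNIV"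
    using assms by (intro indep_vars_compose2[OF indep_count_terms]) (auto split: option.split)
  moreover have "(\<lambda>j \<omega>. ?g j ((case j of None \<Rightarrow> (\<lambda>\<omega>. real (N \<omega>)) | Some i \<Rightarrow> A i) \<omega>)) =
      (\<lambda>j. case j of None \<Rightarrow> (\<lambda>\<omega>. of_bool (N \<omega> = n)) | Some i \<Rightarrow> (\<lambda>\<omega>. f (A i \<omega>)))"
    by (auto simp: fun_eq_iff split: option.split)
  ultimately show ?thesis by simp
qed

lemma integral_count_indicator: "(\<integral>\<omega>. of_bool (N \<omega> = n) \<partial>M) = prob {\<omega> \<in> space M. N \<omega> = n}"
proof -
  have "(\<lambda>\<omega>. of_bool (N \<omega> = n) :: real) = indicator {\<omega>. N \<omega> = n}"
    by (simp add: fun_eq_iff indicator_def)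
  then show ?thesis by (simp add: Collect_conj_eq Int_commute)
qed

lemma
  assumes "f \<in> borel_measurable borel" "integrable M (\<lambda>\<omega>. f (A i \<omega>))"
  shows integrable_count_indicator_mult: "integrable M (\<lambda>\<omega>. of_bool (N \<omega> = n) * f (A i \<omega>))"
    and integral_count_indicator_mult:
      "(\<integral>\<omega>. of_bool (N \<omega> = n) * f (A i \<omega>) \<partial>M) = prob {\<omega> \<in> space M. N \<omega> = n} * (\<integral>\<omega>. f (A i \<omega>) \<partial>M)"
proof -
  let ?X = "\<lambda>j. case j of None \<Rightarrow> (\<lambda>\<omega>. of_bool (N \<omega> = n)) | Some i \<Rightarrow> (\<lambda>\<omega>. f (A i \<omega>))"
  have indep: "indep_vars (\<lambda>_. borel) ?X {None, Some i}"
    by (rule indep_vars_subset[OF indep_count_indicator_terms[OF assms(1)]]) auto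
  have integrable: "integrable M (?X j)" if "j \<in> {None, Some i}" for j
    using that assms(2) by (auto simp: integrable_const_bound[where B=1])
  show "integrable M (\<lambda>\<omega>. of_bool (N \<omega> = n) * f (A i \<omega>))"
    using indep_vars_integrable[OF _ indep integrable] by simp
  show "(\<integral>\<omega>. of_bool (N \<omega> = n) * f (A i \<omega>) \<partial>M) = prob {\<omega> \<in> space M. N \<omega> = n} * (\<integral>\<omega>. f (A i \<omega>) \<partial>M)"
    using indep_vars_lebesgue_integral[OF _ indep integrable] by (simp add: integral_count_indicator)
qed

lemma
  assumes "i \<noteq> j"
  shows integrable_count_indicator_mult_distinct_terms:
      "integrable M (\<lambda>\<omega>. of_bool (N \<omega> = n) * A i \<omega> * A j \<omega>)"
    and integral_count_indicator_mult_distinct_terms: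
      "(\<integral>\<omega>. of_bool (N \<omega> = n) * A i \<omega> * A j \<omega> \<partial>M) = prob {\<omega> \<in> space M. N \<omega> = n} * a\<^sup>2"
proof -
  let ?X = "\<lambda>j. case j of None \<Rightarrow> (\<lambda>\<omega>. of_bool (N \<omega> = n)) | Some i \<Rightarrow> (\<lambda>\<omega>. A i \<omega>)"
  have indep: "indep_vars (\<lambda>_. borel) ?X {None, Some i, Some j}"
    by (rule indep_vars_subset[OF indep_count_indicator_terms[of "\<lambda>x. x"]]) auto
  have integrable: "integrable M (?X k)" if "k \<in> {None, Some i, Some j}" for k
    using that integrable_term by (auto simp: integrable_const_bound[where B=1])
  show "integrable M (\<lambda>\<omega>. of_bool (N \<omega> = n) * A i \<omega> * A j \<omega>)"
    using indep_vars_integrable[OF _ indep integrable] assms by (simp add: mult.assoc)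
  show "(\<integral>\<omega>. of_bool (N \<omega> = n) * A i \<omega> * A j \<omega> \<partial>M) = prob {\<omega> \<in> space M. N \<omega> = n} * a\<^sup>2"
    using indep_vars_lebesgue_integral[OF _ indep integrable] assms
    by (simp add: integral_count_indicator integral_term mult.assoc power2_eq_square)
qed

lemma
  shows integrable_count_indicator_mult_terms:
      "integrable M (\<lambda>\<omega>. of_bool (N \<omega> = n) * A i \<omega> * A j \<omega>)"
    and integral_count_indicator_mult_terms:
      "(\<integral>\<omega>. of_bool (N \<omega> = n) * A i \<omega> * A j \<omega> \<partial>M)
         = prob {\<omega> \<in> space M. N \<omega> = n} * (if i = j then b else a\<^sup>2)"
proof -
  have square: "c * x * x = c * x\<^sup>2" for c x :: real
    by (simp add: power2_eq_square)
  show "integrable M (\<lambda>\<omega>. of_bool (N \<omega> = n) * A i \<omega> * A j \<omega>)"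
    using integrable_count_indicator_mult[of "\<lambda>x. x\<^sup>2" i n] integrable_term_square
      integrable_count_indicator_mult_distinct_terms[of i j n]
    by (cases "i = j") (simp_all add: square)
  show "(\<integral>\<omega>. of_bool (N \<omega> = n) * A i \<omega> * A j \<omega> \<partial>M)
      = prob {\<omega> \<in> space M. N \<omega> = n} * (if i = j then b else a\<^sup>2)"
    using integral_count_indicator_mult[of "\<lambda>x. x\<^sup>2" i n] integrable_term_square
      integral_count_indicator_mult_distinct_terms[of i j n]
    by (cases "i = j") (simp_all add: square integral_term_square)
qed

lemma integral_count_slice:
  "(\<integral>\<omega>. of_bool (N \<omega> = n) * (\<Sum>i<n. A i \<omega>) \<partial>M) = prob {\<omega> \<in> space M. N \<omega> = n} * (real n * a)"
  using integrable_count_indicator_mult[of "\<lambda>x. x" _ n] integral_count_indicator_mult[of "\<lambda>x. x" _ n]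
  unfolding sum_distrib_left
  by (simp add: integrable_term integral_term del: sum_of_bool_mult_eq)

lemma
  shows integrable_count_slice_square:
      "integrable M (\<lambda>\<omega>. of_bool (N \<omega> = n) * (\<Sum>i<n. A i \<omega>)\<^sup>2)"
    and integral_count_slice_square:
      "(\<integral>\<omega>. of_bool (N \<omega> = n) * (\<Sum>i<n. A i \<omega>)\<^sup>2 \<partial>M)
         = prob {\<omega> \<in> space M. N \<omega> = n} * (real n * (b - a\<^sup>2) + (real n)\<^sup>2 * a\<^sup>2)"
proof -
  have expand: "of_bool (N \<omega> = n) * (\<Sum>i<n. A i \<omega>)\<^sup>2 = (\<Sum>i<n. \<Sum>j<n. of_bool (N \<omega> = n) * A i \<omega> * A j \<omega>)"
    for \<omega>
    unfolding power2_eq_square sum_product unfolding sum_distrib_left by (simp only: mult.assoc)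
  have diagonal: "(\<Sum>j<n. if i = j then b else a\<^sup>2) = real n * a\<^sup>2 + (b - a\<^sup>2)" if "i < n" for i
  proof -
    have "(\<Sum>j<n. if i = j then b else a\<^sup>2) = (\<Sum>j<n. a\<^sup>2 + (if i = j then b - a\<^sup>2 else 0))"
      by (intro sum.cong) auto
    then show ?thesis
      using that by (simp add: sum.distrib)
  qed
  show "integrable M (\<lambda>\<omega>. of_bool (N \<omega> = n) * (\<Sum>i<n. A i \<omega>)\<^sup>2)"
    unfolding expand by (intro Bochner_Integration.integrable_sum integrable_count_indicator_mult_terms)
  have "(\<integral>\<omega>. of_bool (N \<omega> = n) * (\<Sum>i<n. A i \<omega>)\<^sup>2 \<partial>M)
      = (\<Sum>i<n. \<Sum>j<n. \<integral>\<omega>. of_bool (N \<omega> = n) * A i \<omega> * A j \<omega> \<partial>M)"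
    unfolding expand
    by (simp only: Bochner_Integration.integral_sum Bochner_Integration.integrable_sum
        integrable_count_indicator_mult_terms)
  also have "\<dots> = (\<Sum>i<n. prob {\<omega> \<in> space M. N \<omega> = n} * (real n * a\<^sup>2 + (b - a\<^sup>2)))"
    by (intro sum.cong refl)
      (simp only: integral_count_indicator_mult_terms sum_distrib_left[symmetric] diagonal lessThan_iff)
  finally show "(\<integral>\<omega>. of_bool (N \<omega> = n) * (\<Sum>i<n. A i \<omega>)\<^sup>2 \<partial>M)
      = prob {\<omega> \<in> space M. N \<omega> = n} * (real n * (b - a\<^sup>2) + (real n)\<^sup>2 * a\<^sup>2)"
    by (simp add: power2_eq_square algebra_simps)
qed

lemma
  assumes m1: "(\<lambda>n. real n * prob {\<omega> \<in> space M. N \<omega> = n}) sums m1"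
    and m2: "(\<lambda>n. (real n)\<^sup>2 * prob {\<omega> \<in> space M. N \<omega> = n}) sums m2"
  shows integrable_random_sum_square: "integrable M (\<lambda>\<omega>. (\<Sum>i<N \<omega>. A i \<omega>)\<^sup>2)"
    and integral_random_sum_square: "(\<integral>\<omega>. (\<Sum>i<N \<omega>. A i \<omega>)\<^sup>2 \<partial>M) = m1 * (b - a\<^sup>2) + m2 * a\<^sup>2"
proof -
  have slice: "of_bool (N \<omega> = n) * (\<Sum>i<N \<omega>. A i \<omega>)\<^sup>2 = of_bool (N \<omega> = n) * (\<Sum>i<n. A i \<omega>)\<^sup>2"
    for n \<omega> by (cases "N \<omega> = n") simp_all
  have slices_sum: "(\<lambda>n. \<integral>\<omega>. of_bool (N \<omega> = n) * (\<Sum>i<N \<omega>. A i \<omega>)\<^sup>2 \<partial>M) sums (m1 * (b - a\<^sup>2) + m2 * a\<^sup>2)"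
    unfolding slice integral_count_slice_square
    using sums_add[OF sums_mult2[OF m1, of "b - a\<^sup>2"] sums_mult2[OF m2, of "a\<^sup>2"]]
    by (simp add: algebra_simps)
  show integrable: "integrable M (\<lambda>\<omega>. (\<Sum>i<N \<omega>. A i \<omega>)\<^sup>2)"
  proof (rule integrable_of_count_slices[where N=N])
    show "integrable M (\<lambda>\<omega>. of_bool (N \<omega> = n) * (\<Sum>i<N \<omega>. A i \<omega>)\<^sup>2)" for n
      unfolding slice by (rule integrable_count_slice_square)
  qed (use slices_sum sums_summable in auto)
  show "(\<integral>\<omega>. (\<Sum>i<N \<omega>. A i \<omega>)\<^sup>2 \<partial>M) = m1 * (b - a\<^sup>2) + m2 * a\<^sup>2"
    using sums_integral_count_slices[OF measurable_count integrable] slices_sum by (rule sums_unique2)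
qed

lemma
  assumes m1: "(\<lambda>n. real n * prob {\<omega> \<in> space M. N \<omega> = n}) sums m1"
    and m2: "(\<lambda>n. (real n)\<^sup>2 * prob {\<omega> \<in> space M. N \<omega> = n}) sums m2"
  shows integrable_random_sum: "integrable M (\<lambda>\<omega>. \<Sum>i<N \<omega>. A i \<omega>)"
    and integral_random_sum: "(\<integral>\<omega>. (\<Sum>i<N \<omega>. A i \<omega>) \<partial>M) = m1 * a"
proof -
  show integrable: "integrable M (\<lambda>\<omega>. \<Sum>i<N \<omega>. A i \<omega>)"
    by (rule square_integrable_imp_integrable[OF _ integrable_random_sum_square[OF m1 m2]])
      (intro borel_measurable_random_sum measurable_count measurable_term)
  have slice: "of_bool (N \<omega> = n) * (\<Sum>i<N \<omega>. A i \<omega>) = of_bool (N \<omega> = n) * (\<Sum>i<n. A i \<omega>)"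
    for n \<omega> by (cases "N \<omega> = n") simp_all
  have "(\<lambda>n. \<integral>\<omega>. of_bool (N \<omega> = n) * (\<Sum>i<N \<omega>. A i \<omega>) \<partial>M) sums (m1 * a)"
    unfolding slice integral_count_slice using sums_mult2[OF m1, of a] by (simp add: algebra_simps)
  with sums_integral_count_slices[OF measurable_count integrable]
  show "(\<integral>\<omega>. (\<Sum>i<N \<omega>. A i \<omega>) \<partial>M) = m1 * a"
    by (rule sums_unique2)
qed

end

section \<open>Independence through generated \<open>\<sigma>\<close>-algebras\<close>

lemma Int_stable_gen_sets: "Int_stable (gen_sets M N X)"
  unfolding Int_stable_def gen_sets_def
proof safe
  fix A B assume "A \<in> sets N" "B \<in> sets N"
  then show "\<exists>C. (X -` A \<inter> space M) \<inter> (X -` B \<inter> space M) = X -` C \<inter> space M \<and> C \<in> sets N"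
    by (intro exI[of _ "A \<inter> B"]) auto
qed

lemma gen_sets_compose_subset:
  assumes "f \<in> measurable N K" "X \<in> measurable M N"
  shows "gen_sets M K (\<lambda>\<omega>. f (X \<omega>)) \<subseteq> gen_sets M N X"
proof
  fix E assume "E \<in> gen_sets M K (\<lambda>\<omega>. f (X \<omega>))"
  then obtain A where "A \<in> sets K" "E = (\<lambda>\<omega>. f (X \<omega>)) -` A \<inter> space M" by (auto simp: gen_sets_def)
  moreover have "(\<lambda>\<omega>. f (X \<omega>)) -` A \<inter> space M = X -` (f -` A \<inter> space N) \<inter> space M"
    using measurable_space[OF assms(2)] by auto
  ultimately show "E \<in> gen_sets M N X"
    unfolding gen_sets_def using measurable_sets[OF assms(1)] by blast
qed

lemma measurable_sigma_gen_sets: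
  assumes "X \<in> measurable M N" "gen_sets M N X \<subseteq> G" "G \<subseteq> Pow (space M)"
  shows "X \<in> measurable (sigma (space M) G) N"
  using assms unfolding measurable_def gen_sets_def
  by (auto simp: sets_measure_of[OF assms(3)] space_measure_of_conv)

lemma gen_sets_subset_sigma_sets:
  assumes "X \<in> measurable (sigma (space M) G) N" "G \<subseteq> Pow (space M)"
  shows "gen_sets M N X \<subseteq> sigma_sets (space M) G"
  using measurable_sets[OF assms(1)]
  by (auto simp: gen_sets_def sets_measure_of[OF assms(2)] space_measure_of_conv)

context prob_space
begin

lemma measurable_sigma_events:
  assumes "X \<in> measurable (sigma (space M) G) N" "G \<subseteq> events"
  shows "random_variable N X"
proof (rule measurable_mono[THEN subsetD, OF order_refl refl _ _ assms(1)])
  have "G \<subseteq> Pow (space M)" using assms(2) sets.sets_into_space by blast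
  then show "sets (sigma (space M) G) \<subseteq> events"
    using sets.sigma_sets_subset[OF assms(2)] by (simp add: sets_measure_of)
qed (simp add: space_measure_of_conv)

lemma indep_var_of_indep_set_gen_sets:
  assumes "random_variable S X" "random_variable S' Y" "indep_set (gen_sets M S X) (gen_sets M S' Y)"
  shows "indep_var S X S' Y"
  using assms unfolding indep_var_eq gen_sets_def[symmetric]
  by (intro conjI indep_set_sigma_sets Int_stable_gen_sets)

lemma distr_pair_of_indep_set_gen_sets:
  fixes X :: "'a \<Rightarrow> 'b" and Y :: "'a \<Rightarrow> 'c"
  assumes X: "random_variable S X" and Y: "random_variable T Y"
    and indep: "indep_set (gen_sets M S X) (gen_sets M T Y)"
  shows "distr M (S \<Otimes>\<^sub>M T) (\<lambda>\<omega>. (X \<omega>, Y \<omega>)) = distr M S X \<Otimes>\<^sub>M distr M T Y"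
proof -
  interpret X: prob_space "distr M S X" by (rule prob_space_distr) fact
  interpret Y: prob_space "distr M T Y" by (rule prob_space_distr) fact
  interpret XY: pair_prob_space "distr M S X" "distr M T Y" ..
  have XY: "random_variable (S \<Otimes>\<^sub>M T) (\<lambda>\<omega>. (X \<omega>, Y \<omega>))"
    using X Y by (rule measurable_Pair)
  show ?thesis
  proof (rule pair_measure_eqI[symmetric])
    fix A B assume A: "A \<in> sets (distr M S X)" and B: "B \<in> sets (distr M T Y)"
    have "emeasure (distr M (S \<Otimes>\<^sub>M T) (\<lambda>\<omega>. (X \<omega>, Y \<omega>))) (A \<times> B)
        = prob ((X -` A \<inter> space M) \<inter> (Y -` B \<inter> space M))"
      using A B by (auto simp: emeasure_distr[OF XY] emeasure_eq_measure intro!: arg_cong[where f=prob])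
    also have "prob ((X -` A \<inter> space M) \<inter> (Y -` B \<inter> space M))
        = prob (X -` A \<inter> space M) * prob (Y -` B \<inter> space M)"
      using A B by (intro indep_setD[OF indep]) (auto simp: gen_sets_def)
    finally show "emeasure (distr M S X) A * emeasure (distr M T Y) B
        = emeasure (distr M (S \<Otimes>\<^sub>M T) (\<lambda>\<omega>. (X \<omega>, Y \<omega>))) (A \<times> B)"
      using A B X Y by (simp add: emeasure_distr emeasure_eq_measure measure_nonneg ennreal_mult)
  qed (simp_all add: X.sigma_finite_measure_axioms Y.sigma_finite_measure_axioms)
qed

lemma
  fixes X X' :: "'a \<Rightarrow> 'b" and Y Y' :: "'a \<Rightarrow> 'c" and h :: "'b \<times> 'c \<Rightarrow> real"
  assumes XY: "random_variable S X" "random_variable T Y" "indep_set (gen_sets M S X) (gen_sets M T Y)"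
    and XY': "random_variable S X'" "random_variable T Y'" "indep_set (gen_sets M S X') (gen_sets M T Y')"
    and marginals: "distr M S X = distr M S X'" "distr M T Y = distr M T Y'"
    and h: "h \<in> borel_measurable (S \<Otimes>\<^sub>M T)"
  shows integrable_indep_pair_cong:
      "integrable M (\<lambda>\<omega>. h (X \<omega>, Y \<omega>)) \<longleftrightarrow> integrable M (\<lambda>\<omega>. h (X' \<omega>, Y' \<omega>))"
    and integral_indep_pair_cong: "(\<integral>\<omega>. h (X \<omega>, Y \<omega>) \<partial>M) = (\<integral>\<omega>. h (X' \<omega>, Y' \<omega>) \<partial>M)"
proof -
  have pairs: "random_variable (S \<Otimes>\<^sub>M T) (\<lambda>\<omega>. (X \<omega>, Y \<omega>))" "random_variable (S \<Otimes>\<^sub>M T) (\<lambda>\<omega>. (X' \<omega>, Y' \<omega>))"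
    using XY(1,2) XY'(1,2) by (auto intro: measurable_Pair)
  have "distr M (S \<Otimes>\<^sub>M T) (\<lambda>\<omega>. (X \<omega>, Y \<omega>)) = distr M (S \<Otimes>\<^sub>M T) (\<lambda>\<omega>. (X' \<omega>, Y' \<omega>))"
    unfolding distr_pair_of_indep_set_gen_sets[OF XY] distr_pair_of_indep_set_gen_sets[OF XY'] marginals ..
  then show "integrable M (\<lambda>\<omega>. h (X \<omega>, Y \<omega>)) \<longleftrightarrow> integrable M (\<lambda>\<omega>. h (X' \<omega>, Y' \<omega>))"
    and "(\<integral>\<omega>. h (X \<omega>, Y \<omega>) \<partial>M) = (\<integral>\<omega>. h (X' \<omega>, Y' \<omega>) \<partial>M)"
    using integrable_distr_eq[OF pairs(1) h] integrable_distr_eq[OF pairs(2) h]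
      integral_distr[OF pairs(1) h] integral_distr[OF pairs(2) h] by simp_all
qed

lemma
  fixes X Y :: "'a \<Rightarrow> real"
  assumes indep: "indep_var borel X borel Y"
    and X: "integrable M X" "integrable M (\<lambda>\<omega>. (X \<omega>)\<^sup>2)"
    and Y: "integrable M Y" "integrable M (\<lambda>\<omega>. (Y \<omega>)\<^sup>2)"
  shows integrable_indep_sum_square: "integrable M (\<lambda>\<omega>. (X \<omega> + Y \<omega>)\<^sup>2)"
    and integral_indep_sum_square: "(\<integral>\<omega>. (X \<omega> + Y \<omega>)\<^sup>2 \<partial>M)
      = (\<integral>\<omega>. (X \<omega>)\<^sup>2 \<partial>M) + 2 * ((\<integral>\<omega>. X \<omega> \<partial>M) * (\<integral>\<omega>. Y \<omega> \<partial>M)) + (\<integral>\<omega>. (Y \<omega>)\<^sup>2 \<partial>M)"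
proof -
  note product = indep_var_integrable[OF indep X(1) Y(1)] indep_var_lebesgue_integral[OF indep X(1) Y(1)]
  have "has_bochner_integral M (\<lambda>\<omega>. (X \<omega>)\<^sup>2 + 2 * (X \<omega> * Y \<omega>) + (Y \<omega>)\<^sup>2)
      ((\<integral>\<omega>. (X \<omega>)\<^sup>2 \<partial>M) + 2 * ((\<integral>\<omega>. X \<omega> \<partial>M) * (\<integral>\<omega>. Y \<omega> \<partial>M)) + (\<integral>\<omega>. (Y \<omega>)\<^sup>2 \<partial>M))"
    using X Y product
    by (intro has_bochner_integral_add has_bochner_integral_mult_right) (auto simp: has_bochner_integral_iff)
  moreover have "(\<lambda>\<omega>. (X \<omega> + Y \<omega>)\<^sup>2) = (\<lambda>\<omega>. (X \<omega>)\<^sup>2 + 2 * (X \<omega> * Y \<omega>) + (Y \<omega>)\<^sup>2)"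
    by (simp add: fun_eq_iff power2_sum algebra_simps)
  ultimately show "integrable M (\<lambda>\<omega>. (X \<omega> + Y \<omega>)\<^sup>2)"
    and "(\<integral>\<omega>. (X \<omega> + Y \<omega>)\<^sup>2 \<partial>M)
      = (\<integral>\<omega>. (X \<omega>)\<^sup>2 \<partial>M) + 2 * ((\<integral>\<omega>. X \<omega> \<partial>M) * (\<integral>\<omega>. Y \<omega> \<partial>M)) + (\<integral>\<omega>. (Y \<omega>)\<^sup>2 \<partial>M)"
    by (simp_all add: has_bochner_integral_iff)
qed

end

locale indep_generators = prob_space +
  fixes F :: "'v \<Rightarrow> 'a set set"
  assumes indep_generators: "indep_sets F UNIV"
    and Int_stable_generators: "\<And>v. Int_stable (F v)"
begin

lemma generators_subset_events: "(\<Union>v\<in>G. F v) \<subseteq> events"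
  using indep_generators by (auto simp: indep_sets_def)

lemma generators_subset_Pow: "(\<Union>v\<in>G. F v) \<subseteq> Pow (space M)"
  using generators_subset_events sets.sets_into_space by blast

lemma measurable_generated:
  assumes "X \<in> measurable M N" "gen_sets M N X \<subseteq> F v" "v \<in> G"
  shows "X \<in> measurable (sigma (space M) (\<Union>v\<in>G. F v)) N"
  by (rule measurable_sigma_gen_sets[OF assms(1) _ generators_subset_Pow]) (use assms(2,3) in blast)

lemma indep_sets_generated:
  assumes "disjoint_family_on G J"
  shows "indep_sets (\<lambda>j. sigma_sets (space M) (\<Union>v\<in>G j. F v)) J"
  by (rule indep_sets_collect_sigma[OF indep_sets_mono_index[OF _ indep_generators]])
    (use Int_stable_generators assms in auto)

lemma indep_vars_generated:
  assumes "disjoint_family_on G J"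
    and measurable: "\<And>j. j \<in> J \<Longrightarrow> X j \<in> measurable (sigma (space M) (\<Union>v\<in>G j. F v)) (N j)"
  shows "indep_vars N X J"
  unfolding indep_vars_def gen_sets_def[symmetric]
proof (intro conjI ballI)
  fix j assume "j \<in> J"
  then show "random_variable (N j) (X j)"
    using measurable_sigma_events[OF measurable generators_subset_events] by blast
next
  show "indep_sets (\<lambda>j. sigma_sets (space M) (gen_sets M (N j) (X j))) J"
  proof (rule indep_sets_mono_sets[OF indep_sets_generated[OF assms(1)]])
    fix j assume "j \<in> J"
    then show "sigma_sets (space M) (gen_sets M (N j) (X j)) \<subseteq> sigma_sets (space M) (\<Union>v\<in>G j. F v)"
      using gen_sets_subset_sigma_sets[OF measurable generators_subset_Pow]
      by (intro sigma_sets_mono) blast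
  qed
qed

lemma indep_set_generated:
  assumes "G \<inter> H = {}"
    and X: "X \<in> measurable (sigma (space M) (\<Union>v\<in>G. F v)) S"
    and Y: "Y \<in> measurable (sigma (space M) (\<Union>v\<in>H. F v)) T"
  shows "indep_set (gen_sets M S X) (gen_sets M T Y)"
proof -
  have "disjoint_family_on (case_bool G H) UNIV"
    using assms(1) by (auto simp: disjoint_family_on_def split: bool.split)
  from indep_sets_generated[OF this] show ?thesis
    unfolding indep_set_def
    by (rule indep_sets_mono_sets)
      (use gen_sets_subset_sigma_sets[OF X generators_subset_Pow]
        gen_sets_subset_sigma_sets[OF Y generators_subset_Pow] in \<open>auto split: bool.split\<close>)
qed

lemma measurable_mark_generated:
  assumes "R \<in> measurable M SR" "gen_sets M SR R \<subseteq> F u" "u \<in> G"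
    and "P \<in> measurable M SP" "gen_sets M SP P \<subseteq> F v" "v \<in> G"
    and "(\<lambda>(r, p). \<phi> r p) \<in> borel_measurable (SR \<Otimes>\<^sub>M SP)"
  shows "(\<lambda>\<omega>. \<phi> (R \<omega>) (P \<omega>) :: real) \<in> borel_measurable (sigma (space M) (\<Union>v\<in>G. F v))"
  using measurable_compose[OF measurable_Pair[OF measurable_generated measurable_generated] assms(7)]
    assms(1-6) by simp

lemma indep_vars_count_marks:
  fixes N :: "'a \<Rightarrow> nat" and R :: "nat \<Rightarrow> 'a \<Rightarrow> 'b" and P :: "nat \<Rightarrow> 'a \<Rightarrow> 'c"
    and \<phi> :: "'b \<Rightarrow> 'c \<Rightarrow> real"
  assumes indices: "inj vR" "inj vP" "\<And>i. vR i \<noteq> vN" "\<And>i. vP i \<noteq> vN" "\<And>i j. vR i \<noteq> vP j"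
    and N: "N \<in> measurable M (count_space UNIV)" "gen_sets M (count_space UNIV) N \<subseteq> F vN"
    and R: "\<And>i. random_variable SR (R i)" "\<And>i. gen_sets M SR (R i) \<subseteq> F (vR i)"
    and P: "\<And>i. random_variable SP (P i)" "\<And>i. gen_sets M SP (P i) \<subseteq> F (vP i)"
    and \<phi>: "(\<lambda>(r, p). \<phi> r p) \<in> borel_measurable (SR \<Otimes>\<^sub>M SP)"
  shows "indep_vars (\<lambda>_. borel)
    (\<lambda>j. case j of None \<Rightarrow> (\<lambda>\<omega>. real (N \<omega>)) | Some i \<Rightarrow> (\<lambda>\<omega>. \<phi> (R i \<omega>) (P i \<omega>))) UNIV"
proof (rule indep_vars_generated[where G="\<lambda>j. case j of None \<Rightarrow> {vN} | Some i \<Rightarrow> {vR i, vP i}"])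
  show "disjoint_family_on (\<lambda>j. case j of None \<Rightarrow> {vN} | Some i \<Rightarrow> {vR i, vP i}) UNIV"
    using indices by (auto simp: disjoint_family_on_def inj_def split: option.split) metis+
  fix j :: "nat option"
  show "(case j of None \<Rightarrow> (\<lambda>\<omega>. real (N \<omega>)) | Some i \<Rightarrow> (\<lambda>\<omega>. \<phi> (R i \<omega>) (P i \<omega>)))
      \<in> borel_measurable (sigma (space M) (\<Union>v\<in>(case j of None \<Rightarrow> {vN} | Some i \<Rightarrow> {vR i, vP i}). F v))"
  proof (cases j)
    case None
    have "N \<in> measurable (sigma (space M) (F vN)) (count_space UNIV)"
      using measurable_generated[OF N, of "{vN}"] by simp
    then show ?thesis
      using None by (simp add: measurable_compose[OF _ borel_measurable_count_space])
  next
    case (Some i)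
    then show ?thesis
      using measurable_mark_generated[OF R(1,2) _ P(1,2) _ \<phi>, of i "{vR i, vP i}"] by simp
  qed
qed

lemma random_sum_of_marks:
  fixes N :: "'a \<Rightarrow> nat" and R :: "nat \<Rightarrow> 'a \<Rightarrow> 'b" and P :: "nat \<Rightarrow> 'a \<Rightarrow> 'c"
    and \<phi> :: "'b \<Rightarrow> 'c \<Rightarrow> real"
  assumes indices: "inj vR" "inj vP" "\<And>i. vR i \<noteq> vN" "\<And>i. vP i \<noteq> vN" "\<And>i j. vR i \<noteq> vP j"
    and N: "N \<in> measurable M (count_space UNIV)" "gen_sets M (count_space UNIV) N \<subseteq> F vN"
    and R: "\<And>i. random_variable SR (R i)" "\<And>i. gen_sets M SR (R i) \<subseteq> F (vR i)"
      "\<And>i. distr M SR (R i) = distr M SR (R 0)"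
    and P: "\<And>i. random_variable SP (P i)" "\<And>i. gen_sets M SP (P i) \<subseteq> F (vP i)"
      "\<And>i. distr M SP (P i) = distr M SP (P 0)"
    and \<phi>: "(\<lambda>(r, p). \<phi> r p) \<in> borel_measurable (SR \<Otimes>\<^sub>M SP)"
    and moments: "integrable M (\<lambda>\<omega>. \<phi> (R 0 \<omega>) (P 0 \<omega>))" "integrable M (\<lambda>\<omega>. (\<phi> (R 0 \<omega>) (P 0 \<omega>))\<^sup>2)"
  shows "random_sum M N (\<lambda>i \<omega>. \<phi> (R i \<omega>) (P i \<omega>))
    (\<integral>\<omega>. \<phi> (R 0 \<omega>) (P 0 \<omega>) \<partial>M) (\<integral>\<omega>. (\<phi> (R 0 \<omega>) (P 0 \<omega>))\<^sup>2 \<partial>M)"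
proof
  have indep_mark: "indep_set (gen_sets M SR (R i)) (gen_sets M SP (P i))" for i
    using R(1,2) P(1,2) indices(5)
    by (intro indep_set_generated[of "{vR i}" "{vP i}"] measurable_generated) auto
  note pair_cong = integrable_indep_pair_cong[OF R(1) P(1) indep_mark R(1) P(1) indep_mark R(3) P(3)]
    integral_indep_pair_cong[OF R(1) P(1) indep_mark R(1) P(1) indep_mark R(3) P(3)]
  have \<phi>_square: "(\<lambda>(r, p). (\<phi> r p)\<^sup>2) \<in> borel_measurable (SR \<Otimes>\<^sub>M SP)"
    using borel_measurable_power[OF \<phi>, of 2] by (simp add: case_prod_beta)
  show "N \<in> measurable M (count_space UNIV)" by (rule N(1))
  show "indep_vars (\<lambda>_. borel) (\<lambda>j. case j of None \<Rightarrow> (\<lambda>\<omega>. real (N \<omega>))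
      | Some i \<Rightarrow> (\<lambda>\<omega>. \<phi> (R i \<omega>) (P i \<omega>))) UNIV"
    by (rule indep_vars_count_marks[OF indices N R(1,2) P(1,2) \<phi>])
  show "integrable M (\<lambda>\<omega>. \<phi> (R i \<omega>) (P i \<omega>))"
    and "(\<integral>\<omega>. \<phi> (R i \<omega>) (P i \<omega>) \<partial>M) = (\<integral>\<omega>. \<phi> (R 0 \<omega>) (P 0 \<omega>) \<partial>M)" for i
    using pair_cong[OF \<phi>, of i] moments(1) by simp_all
  show "integrable M (\<lambda>\<omega>. (\<phi> (R i \<omega>) (P i \<omega>))\<^sup>2)"
    and "(\<integral>\<omega>. (\<phi> (R i \<omega>) (P i \<omega>))\<^sup>2 \<partial>M) = (\<integral>\<omega>. (\<phi> (R 0 \<omega>) (P 0 \<omega>))\<^sup>2 \<partial>M)" for i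
    using pair_cong[OF \<phi>_square, of i] moments(2) by simp_all
qed

lemma measurable_random_sum_of_marks:
  fixes N :: "'a \<Rightarrow> nat" and R :: "nat \<Rightarrow> 'a \<Rightarrow> 'b" and P :: "nat \<Rightarrow> 'a \<Rightarrow> 'c"
    and \<phi> :: "'b \<Rightarrow> 'c \<Rightarrow> real"
  assumes N: "N \<in> measurable M (count_space UNIV)" "gen_sets M (count_space UNIV) N \<subseteq> F vN"
    and R: "\<And>i. random_variable SR (R i)" "\<And>i. gen_sets M SR (R i) \<subseteq> F (vR i)"
    and P: "\<And>i. random_variable SP (P i)" "\<And>i. gen_sets M SP (P i) \<subseteq> F (vP i)"
    and \<phi>: "(\<lambda>(r, p). \<phi> r p) \<in> borel_measurable (SR \<Otimes>\<^sub>M SP)"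
  shows "(\<lambda>\<omega>. \<Sum>i<N \<omega>. \<phi> (R i \<omega>) (P i \<omega>))
    \<in> borel_measurable (sigma (space M) (\<Union>v\<in>insert vN (range vR \<union> range vP). F v))"
  by (intro borel_measurable_random_sum measurable_generated[OF N] measurable_mark_generated[OF R _ P _ \<phi>])
    auto

end

lemma (in prob_space) integral_square_add_random_sums:
  assumes S: "random_sum M N A a b" and T: "random_sum M N' A' a' b'"
    and indep: "indep_var borel (\<lambda>\<omega>. \<Sum>i<N \<omega>. A i \<omega>) borel (\<lambda>\<omega>. \<Sum>i<N' \<omega>. A' i \<omega>)"
    and N: "(\<lambda>n. real n * prob {\<omega> \<in> space M. N \<omega> = n}) sums m1"
      "(\<lambda>n. (real n)\<^sup>2 * prob {\<omega> \<in> space M. N \<omega> = n}) sums m2"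
    and N': "(\<lambda>n. real n * prob {\<omega> \<in> space M. N' \<omega> = n}) sums m1'"
      "(\<lambda>n. (real n)\<^sup>2 * prob {\<omega> \<in> space M. N' \<omega> = n}) sums m2'"
  shows "integrable M (\<lambda>\<omega>. ((\<Sum>i<N \<omega>. A i \<omega>) + (\<Sum>i<N' \<omega>. A' i \<omega>))\<^sup>2)"
    and "(\<integral>\<omega>. ((\<Sum>i<N \<omega>. A i \<omega>) + (\<Sum>i<N' \<omega>. A' i \<omega>))\<^sup>2 \<partial>M)
      = m1 * (b - a\<^sup>2) + m2 * a\<^sup>2 + 2 * (m1 * a) * (m1' * a') + m1' * (b' - a'\<^sup>2) + m2' * a'\<^sup>2"
  using integrable_indep_sum_square[OF indep] integral_indep_sum_square[OF indep]
    random_sum.integrable_random_sum[OF S N] random_sum.integrable_random_sum_square[OF S N]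
    random_sum.integral_random_sum[OF S N] random_sum.integral_random_sum_square[OF S N]
    random_sum.integrable_random_sum[OF T N'] random_sum.integrable_random_sum_square[OF T N']
    random_sum.integral_random_sum[OF T N'] random_sum.integral_random_sum_square[OF T N']
  by simp_all

section \<open>The scattering model\<close>

lemma Re_path_gain: "Re (path_gain wl g1 g2 o' r p) = cos_comp wl g1 g2 o' r p"
  and Im_path_gain: "Im (path_gain wl g1 g2 o' r p) = - sin_comp wl g1 g2 o' r p"
  by (simp_all add: path_gain_def cos_comp_def sin_comp_def Re_exp Im_exp)

lemma cmod_add_path_gains_square:
  "(cmod ((\<Sum>i\<in>I. path_gain wl g1 g2 o' (r i) (p i)) + (\<Sum>i\<in>J. path_gain wl g1 g2 o' (r' i) (p' i))))\<^sup>2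
    = ((\<Sum>i\<in>I. cos_comp wl g1 g2 o' (r i) (p i)) + (\<Sum>i\<in>J. cos_comp wl g1 g2 o' (r' i) (p' i)))\<^sup>2
    + ((\<Sum>i\<in>I. sin_comp wl g1 g2 o' (r i) (p i)) + (\<Sum>i\<in>J. sin_comp wl g1 g2 o' (r' i) (p' i)))\<^sup>2"
  unfolding cmod_power2 by (simp add: Re_path_gain Im_path_gain sum_negf power2_eq_square algebra_simps)

lemma
  assumes "(\<lambda>z. g1 (fst z) (snd z)) \<in> borel_measurable borel"
    and "(\<lambda>z. g2 (fst z) (snd z)) \<in> borel_measurable borel"
  shows borel_measurable_cos_comp:
      "(\<lambda>(r, p). cos_comp wl g1 g2 o' r p) \<in> borel_measurable (borel \<Otimes>\<^sub>M borel)"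
    and borel_measurable_sin_comp:
      "(\<lambda>(r, p). sin_comp wl g1 g2 o' r p) \<in> borel_measurable (borel \<Otimes>\<^sub>M borel)"
proof -
  have distances: "(\<lambda>(r::real, p). (dist p 0, dist p o')) \<in> borel_measurable (borel \<Otimes>\<^sub>M borel)"
    by measurable
  have "(\<lambda>(r::real, p). g1 (dist p 0) (dist p o')) \<in> borel_measurable (borel \<Otimes>\<^sub>M borel)"
    and "(\<lambda>(r::real, p). g2 (dist p 0) (dist p o')) \<in> borel_measurable (borel \<Otimes>\<^sub>M borel)"
    using measurable_compose[OF distances assms(1)] measurable_compose[OF distances assms(2)]
    by (simp_all add: case_prod_beta)
  then show "(\<lambda>(r, p). cos_comp wl g1 g2 o' r p) \<in> borel_measurable (borel \<Otimes>\<^sub>M borel)"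
    and "(\<lambda>(r, p). sin_comp wl g1 g2 o' r p) \<in> borel_measurable (borel \<Otimes>\<^sub>M borel)"
    unfolding cos_comp_def sin_comp_def phase_def case_prod_beta by measurable
qed

locale scattering_model = indep_generators M F
  for M :: "'a measure" and F :: "scat_var \<Rightarrow> 'a set set" +
  fixes U :: "'a \<Rightarrow> bool" and Ns Nt :: "'a \<Rightarrow> nat"
    and Ps Pt :: "nat \<Rightarrow> 'a \<Rightarrow> real \<times> real" and Rs Rt :: "nat \<Rightarrow> 'a \<Rightarrow> real"
    and \<mu>s \<mu>t \<gamma> :: real
  assumes generators: \<comment> \<open>\<open>U\<close> and \<open>Nt\<close> share an index: \<open>Nt\<close> is Poisson only conditionally on \<open>U\<close>\<close>
      "F VUNt = gen_sets M (count_space UNIV) (\<lambda>\<omega>. (U \<omega>, Nt \<omega>))"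
      "F VNs = gen_sets M (count_space UNIV) Ns"
      "\<And>i. F (VPs i) = gen_sets M borel (Ps i)" "\<And>i. F (VPt i) = gen_sets M borel (Pt i)"
      "\<And>i. F (VRs i) = gen_sets M borel (Rs i)" "\<And>i. F (VRt i) = gen_sets M borel (Rt i)"
    and measurable_counts [measurable]: "U \<in> measurable M (count_space UNIV)"
      "Ns \<in> measurable M (count_space UNIV)" "Nt \<in> measurable M (count_space UNIV)"
    and measurable_marks [measurable]: "\<And>i. Ps i \<in> borel_measurable M" "\<And>i. Pt i \<in> borel_measurable M"
      "\<And>i. Rs i \<in> borel_measurable M" "\<And>i. Rt i \<in> borel_measurable M"
    and identical_marks:
      "\<And>i. distr M borel (Ps i) = distr M borel (Ps 0)" "\<And>i. distr M borel (Pt i) = distr M borel (Pt 0)"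
      "\<And>i. distr M borel (Rs i) = distr M borel (Rs 0)" "\<And>i. distr M borel (Rt i) = distr M borel (Rt 0)"
    and Ns_dist: "\<And>n. prob {\<omega> \<in> space M. Ns \<omega> = n} = poisson_prob \<mu>s n"
    and UNt_dist: "\<And>u n. prob {\<omega> \<in> space M. U \<omega> = u \<and> Nt \<omega> = n}
      = (if u then \<gamma> else 1 - \<gamma>) * poisson_prob (if u then \<mu>t else 0) n"
begin

lemma gen_sets_Nt: "gen_sets M (count_space UNIV) Nt \<subseteq> gen_sets M (count_space UNIV) (\<lambda>\<omega>. (U \<omega>, Nt \<omega>))"
  using gen_sets_compose_subset[of snd "count_space UNIV" "count_space UNIV" "\<lambda>\<omega>. (U \<omega>, Nt \<omega>)" M]
  by simp

lemma
  shows sums_Ns_mean: "(\<lambda>n. real n * prob {\<omega> \<in> space M. Ns \<omega> = n}) sums \<mu>s"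
    and sums_Ns_second_moment: "(\<lambda>n. (real n)\<^sup>2 * prob {\<omega> \<in> space M. Ns \<omega> = n}) sums (\<mu>s + \<mu>s\<^sup>2)"
  unfolding Ns_dist by (rule sums_poisson_mean sums_poisson_second_moment)+

lemma prob_Nt: "prob {\<omega> \<in> space M. Nt \<omega> = n} = \<gamma> * poisson_prob \<mu>t n + (1 - \<gamma>) * poisson_prob 0 n"
proof -
  have "{\<omega> \<in> space M. Nt \<omega> = n}
      = {\<omega> \<in> space M. U \<omega> = True \<and> Nt \<omega> = n} \<union> {\<omega> \<in> space M. U \<omega> = False \<and> Nt \<omega> = n}"
    by auto
  then have "prob {\<omega> \<in> space M. Nt \<omega> = n}
      = prob {\<omega> \<in> space M. U \<omega> = True \<and> Nt \<omega> = n} + prob {\<omega> \<in> space M. U \<omega> = False \<and> Nt \<omega> = n}"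
    by (simp only:) (rule finite_measure_Union; auto)
  then show ?thesis
    using UNt_dist[of True n] UNt_dist[of False n] by simp
qed

lemma
  shows sums_Nt_mean: "(\<lambda>n. real n * prob {\<omega> \<in> space M. Nt \<omega> = n}) sums (\<gamma> * \<mu>t)"
    and sums_Nt_second_moment: "(\<lambda>n. (real n)\<^sup>2 * prob {\<omega> \<in> space M. Nt \<omega> = n}) sums (\<gamma> * (\<mu>t + \<mu>t\<^sup>2))"
  unfolding prob_Nt
  using sums_add[OF sums_mult[OF sums_poisson_mean[of \<mu>t], of \<gamma>] sums_mult[OF sums_poisson_mean[of 0], of "1 - \<gamma>"]]
    sums_add[OF sums_mult[OF sums_poisson_second_moment[of \<mu>t], of \<gamma>]
      sums_mult[OF sums_poisson_second_moment[of 0], of "1 - \<gamma>"]]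
  by (simp_all add: algebra_simps)

lemma random_sum_short:
  fixes \<phi> :: "real \<Rightarrow> real \<times> real \<Rightarrow> real"
  assumes "(\<lambda>(r, p). \<phi> r p) \<in> borel_measurable (borel \<Otimes>\<^sub>M borel)"
    and "integrable M (\<lambda>\<omega>. \<phi> (Rs 0 \<omega>) (Ps 0 \<omega>))" "integrable M (\<lambda>\<omega>. (\<phi> (Rs 0 \<omega>) (Ps 0 \<omega>))\<^sup>2)"
  shows "random_sum M Ns (\<lambda>i \<omega>. \<phi> (Rs i \<omega>) (Ps i \<omega>))
    (\<integral>\<omega>. \<phi> (Rs 0 \<omega>) (Ps 0 \<omega>) \<partial>M) (\<integral>\<omega>. (\<phi> (Rs 0 \<omega>) (Ps 0 \<omega>))\<^sup>2 \<partial>M)"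
  by (rule random_sum_of_marks[where N=Ns and R=Rs and P=Ps and \<phi>=\<phi> and vN=VNs and vR=VRs and vP=VPs
      and SR=borel and SP=borel])
    (auto simp: generators inj_def intro: assms identical_marks)

lemma random_sum_tall:
  fixes \<phi> :: "real \<Rightarrow> real \<times> real \<Rightarrow> real"
  assumes "(\<lambda>(r, p). \<phi> r p) \<in> borel_measurable (borel \<Otimes>\<^sub>M borel)"
    and "integrable M (\<lambda>\<omega>. \<phi> (Rt 0 \<omega>) (Pt 0 \<omega>))" "integrable M (\<lambda>\<omega>. (\<phi> (Rt 0 \<omega>) (Pt 0 \<omega>))\<^sup>2)"
  shows "random_sum M Nt (\<lambda>i \<omega>. \<phi> (Rt i \<omega>) (Pt i \<omega>))
    (\<integral>\<omega>. \<phi> (Rt 0 \<omega>) (Pt 0 \<omega>) \<partial>M) (\<integral>\<omega>. (\<phi> (Rt 0 \<omega>) (Pt 0 \<omega>))\<^sup>2 \<partial>M)"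
  by (rule random_sum_of_marks[where N=Nt and R=Rt and P=Pt and \<phi>=\<phi> and vN=VUNt and vR=VRt and vP=VPt
      and SR=borel and SP=borel])
    (auto simp: generators gen_sets_Nt inj_def intro: assms identical_marks)

lemma indep_var_short_tall:
  fixes \<phi> :: "real \<Rightarrow> real \<times> real \<Rightarrow> real"
  assumes \<phi>: "(\<lambda>(r, p). \<phi> r p) \<in> borel_measurable (borel \<Otimes>\<^sub>M borel)"
  shows "indep_var borel (\<lambda>\<omega>. \<Sum>i<Ns \<omega>. \<phi> (Rs i \<omega>) (Ps i \<omega>)) borel (\<lambda>\<omega>. \<Sum>i<Nt \<omega>. \<phi> (Rt i \<omega>) (Pt i \<omega>))"
proof -
  have short: "(\<lambda>\<omega>. \<Sum>i<Ns \<omega>. \<phi> (Rs i \<omega>) (Ps i \<omega>))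
      \<in> borel_measurable (sigma (space M) (\<Union>v\<in>insert VNs (range VRs \<union> range VPs). F v))"
    by (rule measurable_random_sum_of_marks[where N=Ns and R=Rs and P=Ps and \<phi>=\<phi> and SR=borel and SP=borel])
      (use \<phi> in \<open>auto simp: generators\<close>)
  have tall: "(\<lambda>\<omega>. \<Sum>i<Nt \<omega>. \<phi> (Rt i \<omega>) (Pt i \<omega>))
      \<in> borel_measurable (sigma (space M) (\<Union>v\<in>insert VUNt (range VRt \<union> range VPt). F v))"
    by (rule measurable_random_sum_of_marks[where N=Nt and R=Rt and P=Pt and \<phi>=\<phi> and SR=borel and SP=borel])
      (use \<phi> in \<open>auto simp: generators gen_sets_Nt\<close>)
  show ?thesis
    by (rule indep_var_of_indep_set_gen_sets[OF measurable_sigma_events[OF short generators_subset_events]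
          measurable_sigma_events[OF tall generators_subset_events] indep_set_generated[OF _ short tall]])
      auto
qed

lemma has_bochner_integral_square_component:
  fixes \<phi> :: "real \<Rightarrow> real \<times> real \<Rightarrow> real"
  assumes \<phi>: "(\<lambda>(r, p). \<phi> r p) \<in> borel_measurable (borel \<Otimes>\<^sub>M borel)"
    and short: "integrable M (\<lambda>\<omega>. \<phi> (Rs 0 \<omega>) (Ps 0 \<omega>))" "integrable M (\<lambda>\<omega>. (\<phi> (Rs 0 \<omega>) (Ps 0 \<omega>))\<^sup>2)"
    and tall: "integrable M (\<lambda>\<omega>. \<phi> (Rt 0 \<omega>) (Pt 0 \<omega>))" "integrable M (\<lambda>\<omega>. (\<phi> (Rt 0 \<omega>) (Pt 0 \<omega>))\<^sup>2)"
  shows "has_bochner_integral M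
      (\<lambda>\<omega>. ((\<Sum>i<Ns \<omega>. \<phi> (Rs i \<omega>) (Ps i \<omega>)) + (\<Sum>i<Nt \<omega>. \<phi> (Rt i \<omega>) (Pt i \<omega>)))\<^sup>2)
      (\<mu>s * variance (\<lambda>\<omega>. \<phi> (Rs 0 \<omega>) (Ps 0 \<omega>)) + (\<mu>s + \<mu>s\<^sup>2) * (expectation (\<lambda>\<omega>. \<phi> (Rs 0 \<omega>) (Ps 0 \<omega>)))\<^sup>2
        + 2 * (\<mu>s * expectation (\<lambda>\<omega>. \<phi> (Rs 0 \<omega>) (Ps 0 \<omega>))) * (\<gamma> * \<mu>t * expectation (\<lambda>\<omega>. \<phi> (Rt 0 \<omega>) (Pt 0 \<omega>)))
        + \<gamma> * \<mu>t * variance (\<lambda>\<omega>. \<phi> (Rt 0 \<omega>) (Pt 0 \<omega>))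
        + \<gamma> * (\<mu>t + \<mu>t\<^sup>2) * (expectation (\<lambda>\<omega>. \<phi> (Rt 0 \<omega>) (Pt 0 \<omega>)))\<^sup>2)"
  using integral_square_add_random_sums[OF random_sum_short[OF \<phi> short] random_sum_tall[OF \<phi> tall]
      indep_var_short_tall[OF \<phi>] sums_Ns_mean sums_Ns_second_moment sums_Nt_mean sums_Nt_second_moment]
    variance_eq[OF short] variance_eq[OF tall]
  by (simp add: has_bochner_integral_iff mult.assoc)

end

theorem theorem1:
  fixes M :: "'a measure"
    and U :: "'a \<Rightarrow> bool" and Ns Nt :: "'a \<Rightarrow> nat"
    and Ps Pt :: "nat \<Rightarrow> 'a \<Rightarrow> real \<times> real"
    and Rs Rt :: "nat \<Rightarrow> 'a \<Rightarrow> real"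
    and o' :: "real \<times> real"
    and d' vs1 vs2 vt1 vt2 lam_s lam_t \<gamma> wl k0 :: real
    and g1 g2 :: "real \<Rightarrow> real \<Rightarrow> real"
  defines "Ds \<equiv> cball (0::real\<times>real) vs1 \<inter> cball o' vs2"
    and "Dt \<equiv> cball (0::real\<times>real) vt1 \<inter> cball o' vt2"
    and "\<mu>s \<equiv> lam_s * lens_area d' vs1 vs2"
    and "\<mu>t \<equiv> lam_t * lens_area d' vt1 vt2"
    and "hs \<equiv> integral\<^sup>L M (\<lambda>\<omega>. cos_comp wl g1 g2 o' (Rs 0 \<omega>) (Ps 0 \<omega>))"
    and "gs \<equiv> integral\<^sup>L M (\<lambda>\<omega>. (cos_comp wl g1 g2 o' (Rs 0 \<omega>) (Ps 0 \<omega>)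
                 - integral\<^sup>L M (\<lambda>\<omega>. cos_comp wl g1 g2 o' (Rs 0 \<omega>) (Ps 0 \<omega>)))\<^sup>2)"
    and "hs' \<equiv> integral\<^sup>L M (\<lambda>\<omega>. sin_comp wl g1 g2 o' (Rs 0 \<omega>) (Ps 0 \<omega>))"
    and "gs' \<equiv> integral\<^sup>L M (\<lambda>\<omega>. (sin_comp wl g1 g2 o' (Rs 0 \<omega>) (Ps 0 \<omega>)
                 - integral\<^sup>L M (\<lambda>\<omega>. sin_comp wl g1 g2 o' (Rs 0 \<omega>) (Ps 0 \<omega>)))\<^sup>2)"
    and "ht \<equiv> integral\<^sup>L M (\<lambda>\<omega>. cos_comp wl g1 g2 o' (Rt 0 \<omega>) (Pt 0 \<omega>))"
    and "gt \<equiv> integral\<^sup>L M (\<lambda>\<omega>. (cos_comp wl g1 g2 o' (Rt 0 \<omega>) (Pt 0 \<omega>)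
                 - integral\<^sup>L M (\<lambda>\<omega>. cos_comp wl g1 g2 o' (Rt 0 \<omega>) (Pt 0 \<omega>)))\<^sup>2)"
    and "ht' \<equiv> integral\<^sup>L M (\<lambda>\<omega>. sin_comp wl g1 g2 o' (Rt 0 \<omega>) (Pt 0 \<omega>))"
    and "gt' \<equiv> integral\<^sup>L M (\<lambda>\<omega>. (sin_comp wl g1 g2 o' (Rt 0 \<omega>) (Pt 0 \<omega>)
                 - integral\<^sup>L M (\<lambda>\<omega>. sin_comp wl g1 g2 o' (Rt 0 \<omega>) (Pt 0 \<omega>)))\<^sup>2)"
    and "Pr \<equiv> \<lambda>\<omega>. k0 * (cmod ((\<Sum>i<Ns \<omega>. path_gain wl g1 g2 o' (Rs i \<omega>) (Ps i \<omega>))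
                            + (\<Sum>i<Nt \<omega>. path_gain wl g1 g2 o' (Rt i \<omega>) (Pt i \<omega>))))\<^sup>2"
  assumes M: "prob_space M"
    and o': "norm o' = d'" "d' > 0"
    and radii: "vs1 > 0" "vs2 > 0" "vt1 > 0" "vt2 > 0"
    and area_pos: "emeasure lborel Ds > 0" "emeasure lborel Dt > 0"
    and lam: "lam_s > 0" "lam_t > 0"
    and gam: "0 \<le> \<gamma>" "\<gamma> \<le> 1"
    and wl: "wl > 0" and k0: "k0 > 0"
    and g2_pos: "\<And>x y. x > 0 \<Longrightarrow> y > 0 \<Longrightarrow> g2 x y > 0"
    and g_meas: "(\<lambda>z. g1 (fst z) (snd z)) \<in> borel_measurable borel"
                "(\<lambda>z. g2 (fst z) (snd z)) \<in> borel_measurable borel"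
    and meas: "U \<in> measurable M (count_space UNIV)"
      "Ns \<in> measurable M (count_space UNIV)" "Nt \<in> measurable M (count_space UNIV)"
      "\<And>i. Ps i \<in> borel_measurable M" "\<And>i. Pt i \<in> borel_measurable M"
      "\<And>i. Rs i \<in> borel_measurable M" "\<And>i. Rt i \<in> borel_measurable M"
    and Ns_dist: "\<And>n. measure M {\<omega> \<in> space M. Ns \<omega> = n} = poisson_prob \<mu>s n"
    and UNt_dist: "\<And>u n. measure M {\<omega> \<in> space M. U \<omega> = u \<and> Nt \<omega> = n}
                     = (if u then \<gamma> else 1 - \<gamma>) * poisson_prob (if u then \<mu>t else 0) n"
    and Ps_unif: "\<And>i. distr M lborel (Ps i) = uniform_measure lborel Ds"
    and Pt_unif: "\<And>i. distr M lborel (Pt i) = uniform_measure lborel Dt"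
    and Rs_id: "\<And>i. distr M borel (Rs i) = distr M borel (Rs 0)"
    and Rt_id: "\<And>i. distr M borel (Rt i) = distr M borel (Rt 0)"
    and indep: "prob_space.indep_sets M (\<lambda>v. case v of
                   VUNt \<Rightarrow> gen_sets M (count_space UNIV) (\<lambda>\<omega>. (U \<omega>, Nt \<omega>))
                 | VNs \<Rightarrow> gen_sets M (count_space UNIV) Ns
                 | VPs i \<Rightarrow> gen_sets M borel (Ps i)
                 | VPt i \<Rightarrow> gen_sets M borel (Pt i)
                 | VRs i \<Rightarrow> gen_sets M borel (Rs i)
                 | VRt i \<Rightarrow> gen_sets M borel (Rt i)) UNIV"
    and finite_moments:
      "integrable M (\<lambda>\<omega>. cos_comp wl g1 g2 o' (Rs 0 \<omega>) (Ps 0 \<omega>))"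
      "integrable M (\<lambda>\<omega>. (cos_comp wl g1 g2 o' (Rs 0 \<omega>) (Ps 0 \<omega>))\<^sup>2)"
      "integrable M (\<lambda>\<omega>. sin_comp wl g1 g2 o' (Rs 0 \<omega>) (Ps 0 \<omega>))"
      "integrable M (\<lambda>\<omega>. (sin_comp wl g1 g2 o' (Rs 0 \<omega>) (Ps 0 \<omega>))\<^sup>2)"
      "integrable M (\<lambda>\<omega>. cos_comp wl g1 g2 o' (Rt 0 \<omega>) (Pt 0 \<omega>))"
      "integrable M (\<lambda>\<omega>. (cos_comp wl g1 g2 o' (Rt 0 \<omega>) (Pt 0 \<omega>))\<^sup>2)"
      "integrable M (\<lambda>\<omega>. sin_comp wl g1 g2 o' (Rt 0 \<omega>) (Pt 0 \<omega>))"
      "integrable M (\<lambda>\<omega>. (sin_comp wl g1 g2 o' (Rt 0 \<omega>) (Pt 0 \<omega>))\<^sup>2)"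
  shows "integrable M Pr \<and>
    integral\<^sup>L M Pr =
      \<gamma> * k0 * ((gs + hs\<^sup>2 + gs' + hs'\<^sup>2) * \<mu>s + (gt + ht\<^sup>2 + gt' + ht'\<^sup>2) * \<mu>t
                + (hs * \<mu>s + ht * \<mu>t)\<^sup>2 + (hs' * \<mu>s + ht' * \<mu>t)\<^sup>2)
    + (1 - \<gamma>) * k0 * ((gs + hs\<^sup>2 + gs' + hs'\<^sup>2) * \<mu>s + (hs * \<mu>s)\<^sup>2 + (hs' * \<mu>s)\<^sup>2)"
proof -
  have positions_identical: "distr M borel (Ps i) = distr M borel (Ps 0)" "distr M borel (Pt i) = distr M borel (Pt 0)"
    for i
  proof -
    have "distr M borel X = distr M lborel X" for X :: "'a \<Rightarrow> real \<times> real"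
      by (rule distr_cong) simp_all
    then show "distr M borel (Ps i) = distr M borel (Ps 0)" "distr M borel (Pt i) = distr M borel (Pt 0)"
      by (simp_all add: Ps_unif Pt_unif)
  qed
  interpret scattering_model M "\<lambda>v. case v of
        VUNt \<Rightarrow> gen_sets M (count_space UNIV) (\<lambda>\<omega>. (U \<omega>, Nt \<omega>))
      | VNs \<Rightarrow> gen_sets M (count_space UNIV) Ns
      | VPs i \<Rightarrow> gen_sets M borel (Ps i)
      | VPt i \<Rightarrow> gen_sets M borel (Pt i)
      | VRs i \<Rightarrow> gen_sets M borel (Rs i)
      | VRt i \<Rightarrow> gen_sets M borel (Rt i)" U Ns Nt Ps Pt Rs Rt \<mu>s \<mu>t \<gamma>
    by (intro scattering_model.intro indep_generators.intro scattering_model_axioms.intro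
        indep_generators_axioms.intro M indep meas Ns_dist UNt_dist Rs_id Rt_id positions_identical)
      (simp_all add: Int_stable_gen_sets split: scat_var.split)
  have cos: "has_bochner_integral M
      (\<lambda>\<omega>. ((\<Sum>i<Ns \<omega>. cos_comp wl g1 g2 o' (Rs i \<omega>) (Ps i \<omega>))
        + (\<Sum>i<Nt \<omega>. cos_comp wl g1 g2 o' (Rt i \<omega>) (Pt i \<omega>)))\<^sup>2)
      (\<mu>s * gs + (\<mu>s + \<mu>s\<^sup>2) * hs\<^sup>2 + 2 * (\<mu>s * hs) * (\<gamma> * \<mu>t * ht) + \<gamma> * \<mu>t * gt + \<gamma> * (\<mu>t + \<mu>t\<^sup>2) * ht\<^sup>2)"
    unfolding hs_def gs_def ht_def gt_def
    by (rule has_bochner_integral_square_component[OF borel_measurable_cos_comp[OF g_meas] finite_moments(1,2,5,6)])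
  have sin: "has_bochner_integral M
      (\<lambda>\<omega>. ((\<Sum>i<Ns \<omega>. sin_comp wl g1 g2 o' (Rs i \<omega>) (Ps i \<omega>))
        + (\<Sum>i<Nt \<omega>. sin_comp wl g1 g2 o' (Rt i \<omega>) (Pt i \<omega>)))\<^sup>2)
      (\<mu>s * gs' + (\<mu>s + \<mu>s\<^sup>2) * hs'\<^sup>2 + 2 * (\<mu>s * hs') * (\<gamma> * \<mu>t * ht') + \<gamma> * \<mu>t * gt'
        + \<gamma> * (\<mu>t + \<mu>t\<^sup>2) * ht'\<^sup>2)"
    unfolding hs'_def gs'_def ht'_def gt'_def
    by (rule has_bochner_integral_square_component[OF borel_measurable_sin_comp[OF g_meas] finite_moments(3,4,7,8)])
  have "has_bochner_integral M Pr (k0 * ((\<mu>s * gs + (\<mu>s + \<mu>s\<^sup>2) * hs\<^sup>2 + 2 * (\<mu>s * hs) * (\<gamma> * \<mu>t * ht)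
      + \<gamma> * \<mu>t * gt + \<gamma> * (\<mu>t + \<mu>t\<^sup>2) * ht\<^sup>2) + (\<mu>s * gs' + (\<mu>s + \<mu>s\<^sup>2) * hs'\<^sup>2
      + 2 * (\<mu>s * hs') * (\<gamma> * \<mu>t * ht') + \<gamma> * \<mu>t * gt' + \<gamma> * (\<mu>t + \<mu>t\<^sup>2) * ht'\<^sup>2)))"
    unfolding Pr_def cmod_add_path_gains_square
    by (intro has_bochner_integral_mult_right has_bochner_integral_add cos sin)
  then show ?thesis
    by (simp add: has_bochner_integral_iff power2_eq_square algebra_simps)
qed

end
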